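(* Let $\mathcal{B}=\{(b,m): m>1,\ b\in B_m\}$. Let $\cong$ be the equivalence relation on $\mathcal{B}$ generated by: (1) for $m>1$ and $a,b\in B_m$, $(b,m)\cong(aba^{-1},m)$; (2) for $m>1$ and any word $\prod_{k=1}^{\ell}\sigma_{i_k}^{\epsilon_k}$ with $1\le i_k\le m-1$, $\epsilon_k\in\{1,-1\}$, $\left(\prod_{k=1}^{\ell}\sigma_{i_k}^{\epsilon_k},m\right)\cong\left(\sigma_1\prod_{k=1}^{\ell}\sigma_{i_k+1}^{\epsilon_k},m+1\right)$; (3) for such words, $\left(\prod_{k=1}^{\ell}\sigma_{i_k}^{\epsilon_k},m\right)\cong\left(\sigma_1^{-1}\prod_{k=1}^{\ell}\sigma_{i_k+1}^{\epsilon_k},m+1\right)$. Then $\cong$ coincides with the Markov equivalence $\sim$ on $\mathcal{B}$.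
   Context: For $n\ge 2$, $B_n$ is the braid group with generators $\sigma_1,\dots,\sigma_{n-1}$ and relations $\sigma_i\sigma_j=\sigma_j\sigma_i$ for $|i-j|\ge 2$ and $\sigma_i\sigma_{i+1}\sigma_i=\sigma_{i+1}\sigma_i\sigma_{i+1}$. For $m<n$, $B_m$ is identified with its image in $B_n$ under the homomorphism sending $\sigma_i\mapsto\sigma_i$. The Markov equivalence $\sim$ on $\mathcal{B}$ is the equivalence relation generated by: $(b,m)\sim(aba^{-1},m)$ for $a,b\in B_m$; $(b,m)\sim(\sigma_m b,m+1)$ for $b\in B_m$; $(b,m)\sim(\sigma_m^{-1}b,m+1)$ for $b\in B_m$. *)

theory Defs
  imports Main
begin

text \<open>Braid words: a letter (i, True) stands for sigma_i, (i, False) for sigma_i^{-1}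
  (generators are 1-indexed). A word is a letter list, read left to right as a product.\<close>

type_synonym bletter = "nat \<times> bool"
type_synonym bword = "bletter list"

definition valid_word :: "nat \<Rightarrow> bword \<Rightarrow> bool" where
  "valid_word m w \<longleftrightarrow> (\<forall>(i, e) \<in> set w. 1 \<le> i \<and> i \<le> m - 1)"

definition inv_word :: "bword \<Rightarrow> bword" where
  "inv_word w = rev (map (\<lambda>(i, e). (i, \<not> e)) w)"

definition shift_word :: "bword \<Rightarrow> bword" where
  "shift_word w = map (\<lambda>(i, e). (i + 1, e)) w"

inductive braid_rel :: "nat \<Rightarrow> bword \<Rightarrow> bword \<Rightarrow> bool" for m where
  cancel: "1 \<le> i \<Longrightarrow> i \<le> m - 1 \<Longrightarrow> braid_rel m [(i, e), (i, \<not> e)] []"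
| comm: "1 \<le> i \<Longrightarrow> i \<le> m - 1 \<Longrightarrow> 1 \<le> j \<Longrightarrow> j \<le> m - 1 \<Longrightarrow> i + 2 \<le> j \<or> j + 2 \<le> i
          \<Longrightarrow> braid_rel m [(i, True), (j, True)] [(j, True), (i, True)]"
| braid: "1 \<le> i \<Longrightarrow> i + 1 \<le> m - 1
          \<Longrightarrow> braid_rel m [(i, True), (i + 1, True), (i, True)] [(i + 1, True), (i, True), (i + 1, True)]"

inductive braid_eq :: "nat \<Rightarrow> bword \<Rightarrow> bword \<Rightarrow> bool" for m where
  refl: "valid_word m w \<Longrightarrow> braid_eq m w w"
| rel: "braid_rel m u v \<Longrightarrow> valid_word m p \<Longrightarrow> valid_word m s \<Longrightarrow> braid_eq m (p @ u @ s) (p @ v @ s)"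
| sym: "braid_eq m w v \<Longrightarrow> braid_eq m v w"
| trans: "braid_eq m u v \<Longrightarrow> braid_eq m v w \<Longrightarrow> braid_eq m u w"

inductive markov_eq :: "bword \<times> nat \<Rightarrow> bword \<times> nat \<Rightarrow> bool" where
  same: "1 < m \<Longrightarrow> braid_eq m w w' \<Longrightarrow> markov_eq (w, m) (w', m)"
| conj: "1 < m \<Longrightarrow> valid_word m a \<Longrightarrow> valid_word m b \<Longrightarrow> markov_eq (b, m) (a @ b @ inv_word a, m)"
| stab_pos: "1 < m \<Longrightarrow> valid_word m b \<Longrightarrow> markov_eq (b, m) ((m, True) # b, m + 1)"
| stab_neg: "1 < m \<Longrightarrow> valid_word m b \<Longrightarrow> markov_eq (b, m) ((m, False) # b, m + 1)"
| sym: "markov_eq x y \<Longrightarrow> markov_eq y x"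
| trans: "markov_eq x y \<Longrightarrow> markov_eq y z \<Longrightarrow> markov_eq x z"

inductive alt_eq :: "bword \<times> nat \<Rightarrow> bword \<times> nat \<Rightarrow> bool" where
  same: "1 < m \<Longrightarrow> braid_eq m w w' \<Longrightarrow> alt_eq (w, m) (w', m)"
| conj: "1 < m \<Longrightarrow> valid_word m a \<Longrightarrow> valid_word m b \<Longrightarrow> alt_eq (b, m) (a @ b @ inv_word a, m)"
| stab_pos: "1 < m \<Longrightarrow> valid_word m w \<Longrightarrow> alt_eq (w, m) ((1, True) # shift_word w, m + 1)"
| stab_neg: "1 < m \<Longrightarrow> valid_word m w \<Longrightarrow> alt_eq (w, m) ((1, False) # shift_word w, m + 1)"
| sym: "alt_eq x y \<Longrightarrow> alt_eq y x"
| trans: "alt_eq x y \<Longrightarrow> alt_eq y z \<Longrightarrow> alt_eq x z"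

end

theory Submission
  imports Defs
begin

text \<open>Let \<open>\<delta>_k = \<sigma>_1 \<sigma>_2 \<dots> \<sigma>_k\<close>. For \<open>i < k < n\<close> one has \<open>\<delta>_k \<sigma>_i = \<sigma>_(i+1) \<delta>_k\<close> in \<open>B_n\<close>,
  so conjugation by \<open>\<delta>_k\<close> shifts every word of \<open>B_k\<close>, and \<open>\<Delta> = \<delta>_m \<delta>_(m-1)\<close> satisfies
  \<open>\<Delta> \<sigma>_m = \<sigma>_1 \<Delta>\<close> in \<open>B_(m+1)\<close>. Since \<open>\<Delta> \<delta>_(m-1)\<inverse> = \<delta>_m\<close>, conjugation by \<open>\<Delta>\<close> takes
  \<open>\<sigma>_m\<^sup>\<plusminus>\<^sup>1 \<delta>_(m-1)\<inverse> c \<delta>_(m-1)\<close>, a Markov stabilisation of a conjugate of \<open>c\<close>, to the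
  shifted stabilisation \<open>\<sigma>_1\<^sup>\<plusminus>\<^sup>1 shift(c)\<close>. So each kind of stabilisation is obtained from
  the other up to conjugation in \<open>B_m\<close> and in \<open>B_(m+1)\<close>.\<close>

lemma valid_word_simps [simp]:
  "valid_word m []"
  "valid_word m (x # w) \<longleftrightarrow> (1 \<le> fst x \<and> fst x \<le> m - 1) \<and> valid_word m w"
  "valid_word m (u @ v) \<longleftrightarrow> valid_word m u \<and> valid_word m v"
  by (auto simp: valid_word_def split: prod.splits)

lemma inv_word_simps [simp]:
  "inv_word [] = []"
  "inv_word (x # w) = inv_word w @ [(fst x, \<not> snd x)]"
  "inv_word (u @ v) = inv_word v @ inv_word u"
  "inv_word (inv_word w) = w"
  "valid_word m (inv_word w) = valid_word m w"
  by (auto simp: inv_word_def valid_word_def case_prod_beta rev_map[symmetric] comp_def)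

lemma shift_word_simps [simp]:
  "shift_word [] = []"
  "shift_word (x # w) = (fst x + 1, snd x) # shift_word w"
  "shift_word (u @ v) = shift_word u @ shift_word v"
  by (auto simp: shift_word_def case_prod_beta)

lemma valid_word_mono: "valid_word m w \<Longrightarrow> m \<le> n \<Longrightarrow> valid_word n w"
  by (induction w) auto

lemma valid_shift_word: "valid_word m w \<Longrightarrow> m \<le> n - 1 \<Longrightarrow> valid_word n (shift_word w)"
  by (induction w) auto

lemma braid_rel_valid: "braid_rel m u v \<Longrightarrow> valid_word m u \<and> valid_word m v"
  by (induction rule: braid_rel.induct) auto

lemma braid_eq_valid: "braid_eq m u v \<Longrightarrow> valid_word m u \<and> valid_word m v"
  by (induction rule: braid_eq.induct) (auto dest: braid_rel_valid)

declare braid_eq.trans [trans] markov_eq.trans [trans] alt_eq.trans [trans]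

lemma braid_eq_context:
  "braid_eq m u v \<Longrightarrow> valid_word m p \<Longrightarrow> valid_word m s \<Longrightarrow> braid_eq m (p @ u @ s) (p @ v @ s)"
proof (induction arbitrary: p s rule: braid_eq.induct)
  case (refl w)
  then show ?case by (auto intro: braid_eq.refl)
next
  case (rel u v p' s')
  have "braid_eq m ((p @ p') @ u @ (s' @ s)) ((p @ p') @ v @ (s' @ s))"
    using rel by (intro braid_eq.rel) auto
  then show ?case by simp
next
  case (sym w v)
  then show ?case by (blast intro: braid_eq.sym)
next
  case (trans u v w)
  then show ?case by (blast intro: braid_eq.trans)
qed

lemma braid_eq_append:
  assumes "braid_eq m u u'" "braid_eq m v v'"
  shows "braid_eq m (u @ v) (u' @ v')"
proof -
  have "braid_eq m ([] @ u @ v) ([] @ u' @ v)"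
    using assms braid_eq_valid by (intro braid_eq_context) auto
  moreover have "braid_eq m (u' @ v @ []) (u' @ v' @ [])"
    using assms braid_eq_valid by (intro braid_eq_context) auto
  ultimately show ?thesis by (auto intro: braid_eq.trans)
qed

lemma braid_eq_inv_word_right: "valid_word m w \<Longrightarrow> braid_eq m (w @ inv_word w) []"
proof (induction w)
  case Nil
  then show ?case by (auto intro: braid_eq.refl)
next
  case (Cons x w)
  obtain i e where x: "x = (i, e)" by (cases x)
  have "braid_eq m ([x] @ (w @ inv_word w) @ [(i, \<not> e)]) ([x] @ [] @ [(i, \<not> e)])"
    using Cons x by (intro braid_eq_context) auto
  moreover have "braid_eq m ([] @ [(i, e), (i, \<not> e)] @ []) ([] @ [] @ [])"
    using Cons x by (intro braid_eq.rel braid_rel.cancel) auto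
  ultimately show ?case using x by (auto intro: braid_eq.trans)
qed

lemma braid_eq_inv_word_left: "valid_word m w \<Longrightarrow> braid_eq m (inv_word w @ w) []"
  using braid_eq_inv_word_right[of m "inv_word w"] by simp

lemma braid_eq_cancel_inv_word_right:
  "valid_word m p \<Longrightarrow> valid_word m s \<Longrightarrow> valid_word m w \<Longrightarrow>
    braid_eq m (p @ w @ inv_word w @ s) (p @ s)"
  using braid_eq_context[OF braid_eq_inv_word_right[of m w], of p s] by simp

lemma braid_eq_cancel_inv_word_left:
  "valid_word m p \<Longrightarrow> valid_word m s \<Longrightarrow> valid_word m w \<Longrightarrow>
    braid_eq m (p @ inv_word w @ w @ s) (p @ s)"
  using braid_eq_context[OF braid_eq_inv_word_left[of m w], of p s] by simp

lemma braid_eq_conj_inv_word: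
  assumes h: "braid_eq n (a @ u) (v @ a)"
  shows "braid_eq n (a @ inv_word u) (inv_word v @ a)"
proof -
  have valid: "valid_word n a" "valid_word n u" "valid_word n v"
    using braid_eq_valid[OF h] by auto
  have "braid_eq n (a @ inv_word u) (inv_word v @ v @ a @ inv_word u)"
    using braid_eq_cancel_inv_word_left[of n "[]" "a @ inv_word u" v] valid by (simp add: braid_eq.sym)
  also have "braid_eq n \<dots> (inv_word v @ a @ u @ inv_word u)"
    using braid_eq_context[OF braid_eq.sym[OF h], of "inv_word v" "inv_word u"] valid by simp
  also have "braid_eq n \<dots> (inv_word v @ a)"
    using braid_eq_cancel_inv_word_right[of n "inv_word v @ a" "[]" u] valid by simp
  finally show ?thesis .
qed

lemma braid_eq_commute_distant:
  assumes "\<forall>k\<in>set ks. 1 \<le> k \<and> k \<le> n - 1 \<and> (k + 2 \<le> j \<or> j + 2 \<le> k)" "1 \<le> j" "j \<le> n - 1"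
  shows "braid_eq n (map (\<lambda>i. (i, True)) ks @ [(j, True)]) ((j, True) # map (\<lambda>i. (i, True)) ks)"
  using assms
proof (induction ks)
  case Nil
  then show ?case by (auto intro: braid_eq.refl)
next
  case (Cons k ks)
  let ?W = "map (\<lambda>i. (i, True)) ks"
  have "valid_word n ?W" using Cons by (auto simp: valid_word_def)
  then have "braid_eq n ([] @ [(k, True), (j, True)] @ ?W) ([] @ [(j, True), (k, True)] @ ?W)"
    using Cons by (intro braid_eq.rel braid_rel.comm) auto
  moreover have "braid_eq n ([(k, True)] @ (?W @ [(j, True)]) @ []) ([(k, True)] @ ((j, True) # ?W) @ [])"
    using Cons by (intro braid_eq_context) auto
  ultimately show ?case by (auto intro: braid_eq.trans)
qed

definition sigma_prod :: "nat \<Rightarrow> bword" where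
  "sigma_prod k = map (\<lambda>i. (i, True)) [1..<Suc k]"

lemma valid_sigma_prod: "k \<le> n - 1 \<Longrightarrow> valid_word n (sigma_prod k)"
  by (auto simp: sigma_prod_def valid_word_def)

lemma sigma_prod_Suc: "sigma_prod (Suc k) = sigma_prod k @ [(Suc k, True)]"
  by (simp add: sigma_prod_def)

lemma sigma_prod_Suc_shift: "sigma_prod (Suc k) = (1, True) # shift_word (sigma_prod k)"
  by (simp add: sigma_prod_def shift_word_def map_Suc_upt[symmetric] upt_conv_Cons del: upt_Suc)

lemma sigma_prod_conj_generator:
  assumes "1 \<le> i" "i + 1 \<le> m" "m \<le> n - 1"
  shows "braid_eq n (sigma_prod m @ [(i, True)]) ((i + 1, True) # sigma_prod m)"
proof -
  let ?f = "\<lambda>i. (i, True)"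
  define P where "P = map ?f [1..<i]"
  define R where "R = map ?f [i + 2..<Suc m]"
  have "[1..<Suc m] = [1..<i] @ [i, i + 1] @ [i + 2..<Suc m]"
    using assms upt_add_eq_append[of 1 i "Suc m - i"] by (simp add: upt_conv_Cons)
  then have split: "sigma_prod m = P @ [(i, True), (i + 1, True)] @ R"
    unfolding sigma_prod_def P_def R_def by simp
  have valid: "valid_word n P" "valid_word n R"
    using assms by (auto simp: P_def R_def valid_word_def)
  have commute_R: "braid_eq n (R @ [(i, True)]) ((i, True) # R)"
    unfolding R_def using assms by (intro braid_eq_commute_distant) auto
  have commute_P: "braid_eq n (P @ [(i + 1, True)]) ((i + 1, True) # P)"
    unfolding P_def using assms by (intro braid_eq_commute_distant) auto
  have "braid_eq n (sigma_prod m @ [(i, True)]) (P @ [(i, True), (i + 1, True), (i, True)] @ R)"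
    using braid_eq_context[OF commute_R, of "P @ [(i, True), (i + 1, True)]" "[]"] valid assms
    unfolding split by simp
  also have "braid_eq n \<dots> (P @ [(i + 1, True), (i, True), (i + 1, True)] @ R)"
    using braid_eq.rel[OF braid_rel.braid[of i n]] valid assms by simp
  also have "braid_eq n \<dots> ((i + 1, True) # sigma_prod m)"
    using braid_eq_context[OF commute_P, of "[]" "[(i, True), (i + 1, True)] @ R"] valid assms
    unfolding split by simp
  finally show ?thesis .
qed

lemma sigma_prod_conj_letter:
  assumes "1 \<le> i" "i + 1 \<le> m" "m \<le> n - 1"
  shows "braid_eq n (sigma_prod m @ [(i, e)]) ((i + 1, e) # sigma_prod m)"
  using sigma_prod_conj_generator[OF assms]
    braid_eq_conj_inv_word[of n "sigma_prod m" "[(i, True)]" "[(i + 1, True)]"]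
  by (cases e) auto

lemma sigma_prod_conj_word:
  assumes "valid_word m b" "m \<le> n - 1"
  shows "braid_eq n (sigma_prod m @ b) (shift_word b @ sigma_prod m)"
  using assms
proof (induction b)
  case Nil
  then show ?case using valid_sigma_prod by (auto intro: braid_eq.refl)
next
  case (Cons x b)
  obtain i e where x: "x = (i, e)" by (cases x)
  have "braid_eq n ((sigma_prod m @ [(i, e)]) @ b) (((i + 1, e) # sigma_prod m) @ b)"
    using Cons x
    by (intro braid_eq_append sigma_prod_conj_letter braid_eq.refl valid_word_mono[of m b n]) auto
  also have "braid_eq n \<dots> ((i + 1, e) # shift_word b @ sigma_prod m)"
    using braid_eq_context[OF Cons.IH, of "[(i + 1, e)]" "[]"] Cons.prems x by auto
  finally show ?case using x by simp
qed

lemma sigma_prod_pair_conj_last: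
  assumes "1 \<le> m" "m \<le> n - 1"
  shows "braid_eq n ((sigma_prod m @ sigma_prod (m - 1)) @ [(m, e)])
    ((1, e) # sigma_prod m @ sigma_prod (m - 1))"
proof -
  obtain k where k: "m = Suc k" using assms by (cases m) auto
  have "braid_eq n ([(1, True)] @ (sigma_prod (Suc k) @ sigma_prod k) @ [])
      ([(1, True)] @ (shift_word (sigma_prod k) @ sigma_prod (Suc k)) @ [])"
    using assms k by (intro braid_eq_context sigma_prod_conj_word valid_sigma_prod) auto
  then have "braid_eq n ((1, True) # sigma_prod (Suc k) @ sigma_prod k) (sigma_prod (Suc k) @ sigma_prod (Suc k))"
    by (simp add: sigma_prod_Suc_shift)
  then have "braid_eq n ((sigma_prod m @ sigma_prod (m - 1)) @ [(m, True)])
      ((1, True) # sigma_prod m @ sigma_prod (m - 1))"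
    using k by (metis sigma_prod_Suc append_assoc braid_eq.sym diff_Suc_1)
  then show ?thesis
    using braid_eq_conj_inv_word[of n "sigma_prod m @ sigma_prod (m - 1)" "[(m, True)]" "[(1, True)]"]
    by (cases e) auto
qed

lemma stabilisation_conj_shifted_stabilisation:
  assumes "valid_word m c" "1 \<le> m"
  defines "\<Delta> \<equiv> sigma_prod m @ sigma_prod (m - 1)" and "X \<equiv> sigma_prod (m - 1)"
  shows "braid_eq (Suc m) (\<Delta> @ ((m, e) # inv_word X @ c @ X) @ inv_word \<Delta>) ((1, e) # shift_word c)"
proof -
  let ?D = "sigma_prod m"
  have valid: "valid_word (Suc m) X" "valid_word (Suc m) ?D" "valid_word (Suc m) c"
    "valid_word (Suc m) (shift_word c)"
    using assms valid_sigma_prod valid_word_mono[OF assms(1)] valid_shift_word[OF assms(1)] by auto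
  have "braid_eq (Suc m) (\<Delta> @ ((m, e) # inv_word X @ c @ X) @ inv_word \<Delta>)
     ((1, e) # ?D @ X @ inv_word X @ c @ X @ inv_word X @ inv_word ?D)"
    using braid_eq_context[OF sigma_prod_pair_conj_last[of m "Suc m" e], of "[]"] valid assms
    by simp
  also have "braid_eq (Suc m) \<dots> ((1, e) # ?D @ c @ X @ inv_word X @ inv_word ?D)"
    using braid_eq_cancel_inv_word_right[of "Suc m" "(1, e) # ?D"] valid assms by simp
  also have "braid_eq (Suc m) \<dots> ((1, e) # ?D @ c @ inv_word ?D)"
    using braid_eq_cancel_inv_word_right[of "Suc m" "(1, e) # ?D @ c"] valid assms by simp
  also have "braid_eq (Suc m) \<dots> ((1, e) # shift_word c @ ?D @ inv_word ?D)"
    using braid_eq_context[OF sigma_prod_conj_word[OF assms(1)], of "Suc m" "[(1, e)]"] valid assms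
    by simp
  also have "braid_eq (Suc m) \<dots> ((1, e) # shift_word c)"
    using braid_eq_cancel_inv_word_right[of "Suc m" "(1, e) # shift_word c" "[]" ?D] valid assms by simp
  finally show ?thesis .
qed

lemma markov_eq_stab: "1 < m \<Longrightarrow> valid_word m b \<Longrightarrow> markov_eq (b, m) ((m, e) # b, m + 1)"
  using markov_eq.stab_pos[of m b] markov_eq.stab_neg[of m b] by (cases e) auto

lemma alt_eq_stab: "1 < m \<Longrightarrow> valid_word m w \<Longrightarrow> alt_eq (w, m) ((1, e) # shift_word w, m + 1)"
  using alt_eq.stab_pos[of m w] alt_eq.stab_neg[of m w] by (cases e) auto

lemma markov_eq_shifted_stab:
  assumes "1 < m" "valid_word m c"
  shows "markov_eq (c, m) ((1, e) # shift_word c, m + 1)"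
proof -
  define X where "X = sigma_prod (m - 1)"
  define \<Delta> where "\<Delta> = sigma_prod m @ X"
  let ?w = "(m, e) # inv_word X @ c @ X"
  have valid: "valid_word m X" "valid_word (m + 1) \<Delta>" "valid_word (m + 1) ?w"
    using assms by (auto simp: X_def \<Delta>_def intro: valid_sigma_prod valid_word_mono)
  have "markov_eq (c, m) (inv_word X @ c @ inv_word (inv_word X), m)"
    using assms valid by (intro markov_eq.conj) auto
  also have "markov_eq \<dots> (?w, m + 1)"
    using markov_eq_stab assms valid by simp
  also have "markov_eq \<dots> (\<Delta> @ ?w @ inv_word \<Delta>, m + 1)"
    using assms valid by (intro markov_eq.conj) auto
  also have "markov_eq \<dots> ((1, e) # shift_word c, m + 1)"
    using assms stabilisation_conj_shifted_stabilisation[OF assms(2)]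
    by (intro markov_eq.same) (auto simp: X_def \<Delta>_def)
  finally show ?thesis .
qed

lemma alt_eq_markov_stab:
  assumes "1 < m" "valid_word m b"
  shows "alt_eq (b, m) ((m, e) # b, m + 1)"
proof -
  define X where "X = sigma_prod (m - 1)"
  define \<Delta> where "\<Delta> = sigma_prod m @ X"
  define c where "c = X @ b @ inv_word X"
  let ?w = "(m, e) # inv_word X @ c @ X"
  have valid: "valid_word m X" "valid_word m c" "valid_word (m + 1) \<Delta>" "valid_word (m + 1) ?w"
    "valid_word (m + 1) X" "valid_word (m + 1) b"
    using assms by (auto simp: X_def \<Delta>_def c_def intro: valid_sigma_prod valid_word_mono)
  have "alt_eq (b, m) (c, m)"
    unfolding c_def using assms valid by (intro alt_eq.conj) auto
  also have "alt_eq \<dots> ((1, e) # shift_word c, m + 1)"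
    using alt_eq_stab assms valid by simp
  also have "alt_eq \<dots> (\<Delta> @ ?w @ inv_word \<Delta>, m + 1)"
    using assms braid_eq.sym[OF stabilisation_conj_shifted_stabilisation[OF valid(2)]]
    by (intro alt_eq.same) (auto simp: X_def \<Delta>_def)
  also have "alt_eq \<dots> (?w, m + 1)"
    using alt_eq.sym[OF alt_eq.conj[of "m + 1" \<Delta> ?w]] assms valid by simp
  also have "alt_eq \<dots> ((m, e) # b, m + 1)"
  proof -
    have "braid_eq (m + 1) ((m, e) # inv_word X @ X @ b @ inv_word X @ X) ((m, e) # b @ inv_word X @ X)"
      using braid_eq_cancel_inv_word_left[of "m + 1" "[(m, e)]"] assms valid by simp
    also have "braid_eq (m + 1) \<dots> ((m, e) # b)"
      using braid_eq_cancel_inv_word_left[of "m + 1" "(m, e) # b" "[]"] assms valid by simp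
    finally show ?thesis
      unfolding c_def using assms by (intro alt_eq.same) auto
  qed
  finally show ?thesis .
qed

theorem theorem4p4:
  shows "alt_eq = markov_eq"
proof (intro ext iffI)
  show "markov_eq x y" if "alt_eq x y" for x y
    using that
    by (induction rule: alt_eq.induct)
      (rule markov_eq.same markov_eq.conj markov_eq_shifted_stab markov_eq.sym markov_eq.trans;
        assumption)+
  show "alt_eq x y" if "markov_eq x y" for x y
    using that
    by (induction rule: markov_eq.induct)
      (rule alt_eq.same alt_eq.conj alt_eq_markov_stab alt_eq.sym alt_eq.trans; assumption)+
qed

end
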